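(* In the setting of the context, let $P=L^-_{sym}+\tau^+I$, $\bar P=\overline{L^-_{sym}}+\tau^+I$, $Q=L^+_{sym}+\tau^-I$, $\bar Q=\overline{L^+_{sym}}+\tau^-I$, and assume $\|P-\bar P\|\le\Delta_P$ and $\|Q-\bar Q\|\le\Delta_Q$. Then $$\|T-\bar T\|\le\frac{\alpha_s^++\Delta_Q}{\tau^+}\left(\frac{\Delta_P}{\tau^+}+2\sqrt{\frac{\Delta_P}{\tau^+}}\right)+\frac{\Delta_Q}{\tau^+},$$ where $\alpha_s^+=1+\tau^-+\frac{p(1-\eta)}{d_s^+}$.
   Context: SSBM: integers $n\ge2,k\ge2$, $p\in(0,1]$, $\eta\in[0,1/2)$, partition of $[n]$ into nonempty clusters $C_1,\dots,C_k$, $|C_i|=n_i$; edges present independently w.p. $p$, signed $+1$ within and $-1$ across clusters, signs flipped independently w.p. $\eta$. $A^\pm$ positive/negative 0/1 adjacency matrices (of a realization in which all degrees are positive), $D^\pm=\mathrm{diag}(A^\pm\mathbf1)$. $\tau^+>0,\tau^-\ge0$. $L^\pm_{sym}=I-(D^\pm)^{-1/2}A^\pm(D^\pm)^{-1/2}$, $\overline{L^\pm_{sym}}=I-(\mathbb ED^\pm)^{-1/2}\mathbb EA^\pm(\mathbb ED^\pm)^{-1/2}$, $T=(L^-_{sym}+\tau^+I)^{-1/2}(L^+_{sym}+\tau^-I)(L^-_{sym}+\tau^+I)^{-1/2}$, $\bar T$ the same with overlined matrices. $d_s^+=p(ns(1-2\eta)+n\eta-(1-\eta))$ is the expected positive degree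 of a node in a smallest cluster, $s=\min_in_i/n$ (assumed positive). *)

theory Defs
  imports "HOL-Analysis.Analysis"
begin

text \<open>Matrices are n x n real matrices indexed by a finite type 'n (CARD('n) = n).\<close>

definition diag_mat :: "('n::finite \<Rightarrow> real) \<Rightarrow> real^'n^'n" where
  "diag_mat d = (\<chi> i j. if i = j then d i else 0)"

definition deg :: "real^'n^'n \<Rightarrow> 'n::finite \<Rightarrow> real" where
  "deg A i = (\<Sum>j\<in>UNIV. A $ i $ j)"

definition sym_lap :: "real^'n^'n \<Rightarrow> real^'n^'n" where
  "sym_lap A = mat 1 - diag_mat (\<lambda>i. 1 / sqrt (deg A i)) ** A ** diag_mat (\<lambda>i. 1 / sqrt (deg A i))"

definition spec_norm :: "real^'n^'n \<Rightarrow> real" where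
  "spec_norm M = onorm (\<lambda>x. M *v x)"

definition pos_def_mat :: "real^'n^'n \<Rightarrow> bool" where
  "pos_def_mat M \<longleftrightarrow> transpose M = M \<and> (\<forall>x. x \<noteq> 0 \<longrightarrow> x \<bullet> (M *v x) > 0)"

definition mat_inv_sqrt :: "real^'n^'n \<Rightarrow> real^'n^'n" where
  "mat_inv_sqrt M = (THE S. pos_def_mat S \<and> S ** S ** M = mat 1)"

definition T_mat :: "real^'n^'n \<Rightarrow> real^'n^'n \<Rightarrow> real \<Rightarrow> real \<Rightarrow> real^'n^'n" where
  "T_mat Lplus Lminus tau_plus tau_minus =
     mat_inv_sqrt (Lminus + tau_plus *\<^sub>R mat 1) ** (Lplus + tau_minus *\<^sub>R mat 1)
       ** mat_inv_sqrt (Lminus + tau_plus *\<^sub>R mat 1)"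

text \<open>Expected positive/negative adjacency matrices of the SSBM (no self-loops).\<close>
definition exp_adj_pos :: "real \<Rightarrow> real \<Rightarrow> ('n::finite \<Rightarrow> 'k) \<Rightarrow> real^'n^'n" where
  "exp_adj_pos p \<eta> cl = (\<chi> i j. if i = j then 0 else if cl i = cl j then p * (1 - \<eta>) else p * \<eta>)"

definition exp_adj_neg :: "real \<Rightarrow> real \<Rightarrow> ('n::finite \<Rightarrow> 'k) \<Rightarrow> real^'n^'n" where
  "exp_adj_neg p \<eta> cl = (\<chi> i j. if i = j then 0 else if cl i = cl j then p * \<eta> else p * (1 - \<eta>))"

text \<open>(Ap, Am) is a realization of the SSBM with parameters p, eta and cluster map cl, i.e.
  lies in the support of the model: symmetric 0/1 matrices with zero diagonal; each pair
  i \<noteq> j carries at most one signed edge; a missing edge requires p < 1; an edge with the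
  "wrong" sign requires eta > 0.\<close>
definition ssbm_realization :: "real \<Rightarrow> real \<Rightarrow> ('n::finite \<Rightarrow> 'k) \<Rightarrow> real^'n^'n \<Rightarrow> real^'n^'n \<Rightarrow> bool" where
  "ssbm_realization p \<eta> cl Ap Am \<longleftrightarrow>
     (\<forall>i j. Ap $ i $ j \<in> {0, 1} \<and> Am $ i $ j \<in> {0, 1}) \<and>
     transpose Ap = Ap \<and> transpose Am = Am \<and>
     (\<forall>i. Ap $ i $ i = 0 \<and> Am $ i $ i = 0) \<and>
     (\<forall>i j. i \<noteq> j \<longrightarrow>
        \<not> (Ap $ i $ j = 1 \<and> Am $ i $ j = 1) \<and>
        (Ap $ i $ j = 0 \<and> Am $ i $ j = 0 \<longrightarrow> p < 1) \<and>
        (Ap $ i $ j = 1 \<and> cl i \<noteq> cl j \<longrightarrow> \<eta> > 0) \<and>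
        (Am $ i $ j = 1 \<and> cl i = cl j \<longrightarrow> \<eta> > 0))"

definition smin :: "('n::finite \<Rightarrow> 'k::finite) \<Rightarrow> real" where
  "smin cl = real (Min (range (\<lambda>c. card {i. cl i = c}))) / real CARD('n)"

definition ds_plus :: "real \<Rightarrow> real \<Rightarrow> ('n::finite \<Rightarrow> 'k::finite) \<Rightarrow> real" where
  "ds_plus p \<eta> cl = p * (real CARD('n) * smin cl * (1 - 2 * \<eta>) + real CARD('n) * \<eta> - (1 - \<eta>))"

end

theory Submission
  imports Defs
begin

text \<open>Let \<open>S = P\<^sup>-\<^sup>1\<^sup>/\<^sup>2\<close>, \<open>S\<^sub>0 = P\<^sub>0\<^sup>-\<^sup>1\<^sup>/\<^sup>2\<close> (the subscript 0 marking expected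
  matrices) and let \<open>R\<close>, \<open>R\<^sub>0\<close> be the square roots of \<open>P\<close>, \<open>P\<^sub>0\<close>. Then
  \<open>S - S\<^sub>0 = S (R\<^sub>0 - R) S\<^sub>0\<close>, and the square root is \<open>1/2\<close>-Hoelder on positive
  semidefinite matrices, \<open>\<parallel>R - R\<^sub>0\<parallel>\<^sup>2 \<le> \<parallel>R\<^sup>2 - R\<^sub>0\<^sup>2\<parallel> = \<parallel>P - P\<^sub>0\<parallel>\<close>.
  Since \<open>P, P\<^sub>0 \<ge> \<tau>\<^sup>+\<close>, both \<open>S\<close> and \<open>S\<^sub>0\<close> have norm at most \<open>(\<tau>\<^sup>+)\<^sup>-\<^sup>1\<^sup>/\<^sup>2\<close>, so
  \<open>\<parallel>S - S\<^sub>0\<parallel> \<le> \<surd>\<Delta>\<^sub>P / \<tau>\<^sup>+\<close>. Expanding \<open>T - T\<^sub>0\<close> in \<open>E = S - S\<^sub>0\<close> and \<open>Q - Q\<^sub>0\<close>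
  and using \<open>\<parallel>Q\<parallel> \<le> \<parallel>Q\<^sub>0\<parallel> + \<Delta>\<^sub>Q\<close> gives the bound, once \<open>\<parallel>Q\<^sub>0\<parallel> \<le> \<alpha>\<^sub>s\<^sup>+\<close>:
  the expected positive adjacency matrix is a positive semidefinite block matrix minus
  \<open>p (1 - \<eta>) I\<close>, and every expected positive degree is at least \<open>d\<^sub>s\<^sup>+\<close>.
  All spectral facts rest on the spectral theorem for real symmetric matrices, proved by
  maximizing the Rayleigh quotient on orthogonal complements of eigenvectors.\<close>

section \<open>Spectral norm\<close>

lemma spec_norm_bound: "norm (M *v x) \<le> spec_norm M * norm x"
  unfolding spec_norm_def by (rule onorm) simp

lemma spec_norm_le:
  assumes "\<And>x. norm (M *v x) \<le> c * norm x"
  shows "spec_norm M \<le> c"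
  unfolding spec_norm_def using assms by (intro onorm_le)

lemma spec_norm_nonneg: "0 \<le> spec_norm M"
  unfolding spec_norm_def by (rule onorm_pos_le) simp

lemma spec_norm_mult: "spec_norm (A ** B) \<le> spec_norm A * spec_norm B"
  using onorm_compose[of "(*v) A" "(*v) B"]
  by (simp add: spec_norm_def comp_def matrix_vector_mul_assoc)

lemma spec_norm_mult3:
  assumes "spec_norm A \<le> a" "spec_norm B \<le> b" "spec_norm C \<le> c"
  shows "spec_norm (A ** B ** C) \<le> a * b * c"
proof -
  have "0 \<le> a" "0 \<le> b"
    using assms spec_norm_nonneg order_trans by blast+
  have "spec_norm (A ** B ** C) \<le> spec_norm A * spec_norm B * spec_norm C"
    by (meson spec_norm_mult spec_norm_nonneg mult_right_mono order_trans)
  also have "\<dots> \<le> a * b * c"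
    using assms \<open>0 \<le> a\<close> \<open>0 \<le> b\<close> by (intro mult_mono) (auto intro: spec_norm_nonneg)
  finally show ?thesis .
qed

lemma spec_norm_add: "spec_norm (A + B) \<le> spec_norm A + spec_norm B"
  using onorm_triangle[of "(*v) A" "(*v) B"]
  by (simp add: spec_norm_def matrix_vector_mult_add_rdistrib)

lemma spec_norm_minus_commute: "spec_norm (A - B) = spec_norm (B - A)"
proof -
  have "(\<lambda>x. (A - B) *v x) = (\<lambda>x. - ((B - A) *v x))"
    by (simp add: fun_eq_iff matrix_vector_mult_diff_rdistrib)
  then show ?thesis
    unfolding spec_norm_def by (simp only: onorm_neg)
qed

lemma spec_norm_eq_0_iff: "spec_norm M = 0 \<longleftrightarrow> M = 0"
  unfolding spec_norm_def onorm_eq_0[OF matrix_vector_mul_bounded_linear]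
  by (simp add: matrix_eq)

lemma transpose_add: "transpose (A + B) = transpose A + transpose B"
  by (simp add: transpose_def vec_eq_iff)

lemma transpose_diff: "transpose (A - B) = transpose A - transpose B"
  by (simp add: transpose_def vec_eq_iff)

lemma symmetric_matrix_inner:
  fixes A :: "real^'n^'n"
  assumes "transpose A = A"
  shows "(A *v x) \<bullet> y = x \<bullet> (A *v y)"
  by (metis assms dot_lmul_matrix vector_transpose_matrix)

section \<open>The spectral theorem for symmetric matrices\<close>

definition orthonormal_basis :: "('n::finite \<Rightarrow> real^'n) \<Rightarrow> bool" where
  "orthonormal_basis u \<longleftrightarrow> (\<forall>i j. u i \<bullet> u j = (if i = j then 1 else 0))"

definition spectral_mat :: "('n::finite \<Rightarrow> real^'n) \<Rightarrow> ('n \<Rightarrow> real) \<Rightarrow> real^'n^'n" where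
  "spectral_mat u f = (\<chi> a b. \<Sum>i\<in>UNIV. f i * (u i $ a * u i $ b))"

lemma orthonormal_basis_unit: "orthonormal_basis u \<Longrightarrow> u i \<bullet> u i = 1"
  unfolding orthonormal_basis_def by simp

lemma orthonormal_basis_sum_inner:
  assumes "orthonormal_basis u"
  shows "(\<Sum>i\<in>UNIV. c i * (u i \<bullet> u j)) = c j"
proof -
  have "(\<Sum>i\<in>UNIV. c i * (u i \<bullet> u j)) = (\<Sum>i\<in>UNIV. if i = j then c i else 0)"
    using assms unfolding orthonormal_basis_def by (intro sum.cong) auto
  then show ?thesis by simp
qed

lemma orthonormal_basis_inner_sum:
  assumes "orthonormal_basis u"
  shows "u k \<bullet> (\<Sum>j\<in>UNIV. d j *\<^sub>R u j) = d k"
proof -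
  have "u k \<bullet> (\<Sum>j\<in>UNIV. d j *\<^sub>R u j) = (\<Sum>j\<in>UNIV. d j * (u j \<bullet> u k))"
    by (simp add: inner_sum_right inner_commute)
  then show ?thesis
    using orthonormal_basis_sum_inner[OF assms] by simp
qed

lemma orthonormal_basis_span:
  fixes u :: "'n::finite \<Rightarrow> real^'n"
  assumes "orthonormal_basis u"
  shows "span (range u) = UNIV"
proof -
  have "inj u"
    using assms unfolding orthonormal_basis_def inj_def by (metis one_neq_zero)
  then have card: "card (range u) = CARD('n)"
    by (simp add: card_image)
  have "pairwise orthogonal (range u)"
    using assms unfolding orthonormal_basis_def pairwise_def orthogonal_def by auto
  moreover have "0 \<notin> range u"
    using assms unfolding orthonormal_basis_def by (metis imageE inner_zero_left zero_neq_one)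
  ultimately have "independent (range u)"
    by (rule pairwise_orthogonal_independent)
  then show ?thesis
    using card_ge_dim_independent[of "range u" UNIV] card by auto
qed

lemma orthonormal_basis_expansion:
  assumes "orthonormal_basis u"
  shows "x = (\<Sum>i\<in>UNIV. (u i \<bullet> x) *\<^sub>R u i)"
proof -
  let ?y = "x - (\<Sum>i\<in>UNIV. (u i \<bullet> x) *\<^sub>R u i)"
  have "orthogonal ?y (u j)" for j
  proof -
    have "(\<Sum>i\<in>UNIV. (u i \<bullet> x) *\<^sub>R u i) \<bullet> u j = u j \<bullet> x"
      using orthonormal_basis_inner_sum[OF assms, of j "\<lambda>i. u i \<bullet> x"] by (simp add: inner_commute)
    then show ?thesis
      unfolding orthogonal_def inner_diff_left by (simp add: inner_commute[of "u j" x])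
  qed
  moreover have "?y \<in> span (range u)"
    using orthonormal_basis_span[OF assms] by simp
  ultimately have "orthogonal ?y ?y"
    using orthogonal_to_span by blast
  then show ?thesis
    by (simp add: orthogonal_def)
qed

lemma orthonormal_basis_inner_sums:
  assumes "orthonormal_basis u"
  shows "(\<Sum>i\<in>UNIV. c i *\<^sub>R u i) \<bullet> (\<Sum>i\<in>UNIV. d i *\<^sub>R u i) = (\<Sum>i\<in>UNIV. c i * d i)"
  by (simp add: inner_sum_left orthonormal_basis_inner_sum[OF assms])

lemma orthonormal_basis_norm_sq:
  assumes "orthonormal_basis u"
  shows "(norm x)\<^sup>2 = (\<Sum>i\<in>UNIV. (u i \<bullet> x)\<^sup>2)"
proof -
  have "(norm x)\<^sup>2 = x \<bullet> (\<Sum>i\<in>UNIV. (u i \<bullet> x) *\<^sub>R u i)"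
    using orthonormal_basis_expansion[OF assms, of x, symmetric] by (simp add: power2_norm_eq_inner)
  then show ?thesis
    by (simp add: inner_sum_right inner_commute power2_eq_square)
qed

lemma spectral_mat_mult_vec: "spectral_mat u f *v x = (\<Sum>i\<in>UNIV. (f i * (u i \<bullet> x)) *\<^sub>R u i)"
proof -
  have "(spectral_mat u f *v x) $ a = (\<Sum>i\<in>UNIV. (f i * (u i \<bullet> x)) *\<^sub>R u i) $ a" for a
  proof -
    have "(spectral_mat u f *v x) $ a = (\<Sum>b\<in>UNIV. \<Sum>i\<in>UNIV. f i * (u i $ a * u i $ b) * x $ b)"
      by (simp add: spectral_mat_def matrix_vector_mult_def sum_distrib_right)
    also have "\<dots> = (\<Sum>i\<in>UNIV. \<Sum>b\<in>UNIV. f i * (u i $ a * u i $ b) * x $ b)"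
      by (rule sum.swap)
    also have "\<dots> = (\<Sum>i\<in>UNIV. (f i * (u i \<bullet> x)) * u i $ a)"
      by (simp add: inner_vec_def sum_distrib_left sum_distrib_right mult_ac)
    finally show ?thesis
      by (simp add: sum_component)
  qed
  then show ?thesis
    by (simp add: vec_eq_iff)
qed

lemma transpose_spectral_mat: "transpose (spectral_mat u f) = spectral_mat u f"
  unfolding spectral_mat_def transpose_def vec_eq_iff by (auto intro!: sum.cong)

lemma spectral_mat_eigenvector:
  assumes "orthonormal_basis u"
  shows "spectral_mat u f *v u j = f j *\<^sub>R u j"
proof -
  have "spectral_mat u f *v u j = (\<Sum>i\<in>UNIV. if i = j then f j *\<^sub>R u j else 0)"
    unfolding spectral_mat_mult_vec using assms unfolding orthonormal_basis_def
    by (intro sum.cong) auto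
  then show ?thesis by simp
qed

lemma spectral_mat_quadratic_form:
  assumes "orthonormal_basis u"
  shows "x \<bullet> (spectral_mat u f *v x) = (\<Sum>i\<in>UNIV. f i * (u i \<bullet> x)\<^sup>2)"
  by (simp add: spectral_mat_mult_vec inner_sum_right inner_commute power2_eq_square mult_ac)

lemma spectral_mat_mult:
  assumes "orthonormal_basis u"
  shows "spectral_mat u f ** spectral_mat u g = spectral_mat u (\<lambda>i. f i * g i)"
  by (simp add: matrix_eq matrix_vector_mul_assoc[symmetric] spectral_mat_mult_vec
      orthonormal_basis_inner_sum[OF assms] mult_ac)

lemma spectral_mat_one:
  assumes "orthonormal_basis u"
  shows "spectral_mat u (\<lambda>i. 1) = mat 1"
  using orthonormal_basis_expansion[OF assms, symmetric]
  by (simp add: matrix_eq spectral_mat_mult_vec)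

lemma spec_norm_spectral_mat_le:
  assumes u: "orthonormal_basis u" and f: "\<And>i. \<bar>f i\<bar> \<le> c"
  shows "spec_norm (spectral_mat u f) \<le> c"
proof (rule spec_norm_le)
  fix x
  have c: "0 \<le> c"
    using f abs_ge_zero order_trans by blast
  have "(norm (spectral_mat u f *v x))\<^sup>2 = (\<Sum>i\<in>UNIV. (f i * (u i \<bullet> x))\<^sup>2)"
    unfolding spectral_mat_mult_vec power2_norm_eq_inner orthonormal_basis_inner_sums[OF u]
    by (simp add: power2_eq_square)
  also have "\<dots> \<le> (\<Sum>i\<in>UNIV. c\<^sup>2 * (u i \<bullet> x)\<^sup>2)"
  proof (intro sum_mono)
    fix i
    have "(f i)\<^sup>2 \<le> c\<^sup>2"
      using f[of i] by (metis abs_ge_zero power2_abs power_mono)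
    then show "(f i * (u i \<bullet> x))\<^sup>2 \<le> c\<^sup>2 * (u i \<bullet> x)\<^sup>2"
      by (simp add: power_mult_distrib mult_right_mono)
  qed
  also have "\<dots> = (c * norm x)\<^sup>2"
    by (simp add: orthonormal_basis_norm_sq[OF u] sum_distrib_left power_mult_distrib)
  finally show "norm (spectral_mat u f *v x) \<le> c * norm x"
    using c by (meson mult_nonneg_nonneg norm_ge_zero power2_le_imp_le)
qed

lemma quadratic_nonpos_imp_linear_coeff_zero:
  fixes a b :: real
  assumes "0 \<le> a" and nonpos: "\<And>t. a * t + b * t\<^sup>2 \<le> 0"
  shows "a = 0"
proof (rule ccontr)
  assume "a \<noteq> 0"
  with \<open>0 \<le> a\<close> have "0 < a"
    by simp
  define t where "t = a / (1 + \<bar>b\<bar>)"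
  have t: "0 < t"
    using \<open>0 < a\<close> by (simp add: t_def)
  have "0 < a / (1 + \<bar>b\<bar>)"
    using \<open>0 < a\<close> by simp
  also have "\<dots> = a - \<bar>b\<bar> * t"
    by (simp add: t_def field_simps)
  also have "\<dots> \<le> a + b * t"
    using mult_right_mono[OF abs_ge_minus_self[of b], of t] t by simp
  finally have "0 < t * (a + b * t)"
    using t by simp
  with nonpos[of t] show False
    by (simp add: power2_eq_square algebra_simps)
qed

lemma rayleigh_maximizer_eigenvector:
  fixes A :: "real^'n^'n"
  assumes sym: "transpose A = A" and W: "subspace W" and inv: "\<And>x. x \<in> W \<Longrightarrow> A *v x \<in> W"
    and vW: "v \<in> W" and vv: "v \<bullet> v = 1"
    and max: "\<And>x. x \<in> W \<Longrightarrow> x \<bullet> (A *v x) \<le> (v \<bullet> (A *v v)) * (x \<bullet> x)"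
  shows "A *v v = (v \<bullet> (A *v v)) *\<^sub>R v"
proof -
  define \<mu> where "\<mu> = v \<bullet> (A *v v)"
  define w where "w = A *v v - \<mu> *\<^sub>R v"
  have wW: "w \<in> W"
    unfolding w_def using inv[OF vW] vW W by (simp add: subspace_diff subspace_scale)
  have vw: "v \<bullet> w = 0"
    unfolding w_def \<mu>_def using vv by (simp add: inner_diff_right)
  have wAv: "w \<bullet> (A *v v) = w \<bullet> w"
    using vw by (simp add: w_def \<mu>_def inner_diff_left inner_diff_right inner_commute)
  txt \<open>Along \<open>v + t w\<close> the Rayleigh quotient exceeds \<open>\<mu>\<close> by \<open>2 t \<parallel>w\<parallel>\<^sup>2\<close> to first order.\<close>
  have "2 * (w \<bullet> w) * t + (w \<bullet> (A *v w) - \<mu> * (w \<bullet> w)) * t\<^sup>2 \<le> 0" for t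
  proof -
    have "v + t *\<^sub>R w \<in> W"
      using W vW wW by (simp add: subspace_add subspace_scale)
    from max[OF this]
    have le: "(v + t *\<^sub>R w) \<bullet> (A *v (v + t *\<^sub>R w)) \<le> \<mu> * ((v + t *\<^sub>R w) \<bullet> (v + t *\<^sub>R w))"
      unfolding \<mu>_def .
    have quad_A: "(v + t *\<^sub>R w) \<bullet> (A *v (v + t *\<^sub>R w)) = \<mu> + 2 * t * (w \<bullet> w) + t\<^sup>2 * (w \<bullet> (A *v w))"
      using symmetric_matrix_inner[OF sym, of w v] wAv inner_commute[of v "A *v w"]
      by (simp add: \<mu>_def matrix_vector_right_distrib matrix_vector_mult_scaleR inner_add_left
          inner_add_right power2_eq_square algebra_simps)
    have quad_id: "(v + t *\<^sub>R w) \<bullet> (v + t *\<^sub>R w) = 1 + t\<^sup>2 * (w \<bullet> w)"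
      using vv vw by (simp add: inner_add_left inner_add_right power2_eq_square inner_commute)
    show ?thesis
      using le unfolding quad_A quad_id by (simp add: algebra_simps)
  qed
  then have "2 * (w \<bullet> w) = 0"
    by (intro quadratic_nonpos_imp_linear_coeff_zero) simp_all
  then show ?thesis
    by (simp add: w_def \<mu>_def)
qed

lemma rayleigh_maximizer_exists:
  fixes A :: "real^'n^'n"
  assumes W: "subspace W" and a: "a \<in> W" "a \<noteq> 0"
  obtains v where "v \<in> W" "v \<bullet> v = 1" "\<And>x. x \<in> W \<Longrightarrow> x \<bullet> (A *v x) \<le> (v \<bullet> (A *v v)) * (x \<bullet> x)"
proof -
  define K where "K = W \<inter> sphere 0 1"
  have compact: "compact K"
    unfolding K_def using closed_subspace[OF W] compact_sphere
    by (metis compact_Int_closed Int_commute)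
  have "a /\<^sub>R norm a \<in> K"
    unfolding K_def using a subspace_scale[OF W] by simp
  then have nonempty: "K \<noteq> {}"
    by blast
  have continuous: "continuous_on K (\<lambda>x. x \<bullet> (A *v x))"
    by (intro continuous_intros continuous_on_id linear_continuous_on matrix_vector_mul_bounded_linear)
  obtain v where vK: "v \<in> K" and vmax: "\<And>y. y \<in> K \<Longrightarrow> y \<bullet> (A *v y) \<le> v \<bullet> (A *v v)"
    using continuous_attains_sup[OF compact nonempty continuous] by blast
  have "x \<bullet> (A *v x) \<le> (v \<bullet> (A *v v)) * (x \<bullet> x)" if "x \<in> W" for x
  proof (cases "x = 0")
    case False
    have "x /\<^sub>R norm x \<in> K"
      unfolding K_def using False subspace_scale[OF W that] by simp
    then have "(x /\<^sub>R norm x) \<bullet> (A *v (x /\<^sub>R norm x)) \<le> v \<bullet> (A *v v)"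
      by (rule vmax)
    then have "(x \<bullet> (A *v x)) / (norm x)\<^sup>2 \<le> v \<bullet> (A *v v)"
      by (simp add: matrix_vector_mult_scaleR power2_eq_square divide_inverse mult_ac)
    then show ?thesis
      using False by (simp add: divide_le_eq power2_norm_eq_inner mult.commute)
  qed simp
  moreover have "v \<in> W" "v \<bullet> v = 1"
    using vK unfolding K_def by (auto simp: norm_eq_1)
  ultimately show ?thesis
    using that by blast
qed

lemma symmetric_eigenvector_orthogonal:
  fixes A :: "real^'n^'n"
  assumes sym: "transpose A = A" and E: "\<And>e. e \<in> E \<Longrightarrow> \<exists>l. A *v e = l *\<^sub>R e"
    and span: "span E \<noteq> UNIV"
  obtains v l where "v \<bullet> v = 1" "\<And>e. e \<in> E \<Longrightarrow> e \<bullet> v = 0" "A *v v = l *\<^sub>R v"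
proof -
  define W where "W = {x. \<forall>e\<in>E. e \<bullet> x = 0}"
  have W: "subspace W"
    using subspace_orthogonal_to_vectors[of E] by (simp add: W_def orthogonal_def)
  have inv: "A *v x \<in> W" if "x \<in> W" for x
  proof -
    have "e \<bullet> (A *v x) = 0" if "e \<in> E" for e
    proof -
      obtain l where "A *v e = l *\<^sub>R e"
        using E \<open>e \<in> E\<close> by blast
      then have "e \<bullet> (A *v x) = l * (e \<bullet> x)"
        using symmetric_matrix_inner[OF sym, of e x] by simp
      then show ?thesis
        using \<open>x \<in> W\<close> \<open>e \<in> E\<close> unfolding W_def by simp
    qed
    then show ?thesis
      unfolding W_def by simp
  qed
  obtain a where "a \<noteq> 0" and "span E \<subseteq> {x. a \<bullet> x = 0}"
    using span_not_univ_subset_hyperplane[OF span] by blast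
  then have "a \<in> W"
    unfolding W_def using span_base by (fastforce simp: inner_commute)
  then obtain v where "v \<in> W" "v \<bullet> v = 1"
    and "\<And>x. x \<in> W \<Longrightarrow> x \<bullet> (A *v x) \<le> (v \<bullet> (A *v v)) * (x \<bullet> x)"
    using rayleigh_maximizer_exists[OF W _ \<open>a \<noteq> 0\<close>] by metis
  moreover from this have "A *v v = (v \<bullet> (A *v v)) *\<^sub>R v"
    using rayleigh_maximizer_eigenvector[OF sym W inv] by blast
  ultimately show ?thesis
    using that unfolding W_def by blast
qed

lemma orthonormal_eigenvectors_exist:
  fixes A :: "real^'n^'n"
  assumes sym: "transpose A = A" and "k \<le> CARD('n)"
  shows "\<exists>E. finite E \<and> card E = k \<and> pairwise orthogonal E
           \<and> (\<forall>e\<in>E. e \<bullet> e = 1 \<and> (\<exists>l. A *v e = l *\<^sub>R e))"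
  using assms(2)
proof (induction k)
  case 0
  show ?case
    by (intro exI[of _ "{}"]) auto
next
  case (Suc k)
  then obtain E where fin: "finite E" and card: "card E = k" and orth: "pairwise orthogonal E"
    and eig: "\<forall>e\<in>E. e \<bullet> e = 1 \<and> (\<exists>l. A *v e = l *\<^sub>R e)"
    by auto
  have "0 \<notin> E"
    using eig by force
  then have "independent E"
    using orth pairwise_orthogonal_independent by blast
  have "span E \<noteq> UNIV"
  proof
    assume "span E = UNIV"
    then have "dim (UNIV :: (real^'n) set) = card E"
      using dim_span dim_eq_card_independent[OF \<open>independent E\<close>] by metis
    then show False
      using Suc.prems card by simp
  qed
  then obtain v l where vv: "v \<bullet> v = 1" and vE: "\<And>e. e \<in> E \<Longrightarrow> e \<bullet> v = 0"
    and ev: "A *v v = l *\<^sub>R v"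
    using symmetric_eigenvector_orthogonal[OF sym] eig by metis
  have "v \<notin> E"
    using vv vE by force
  show ?case
  proof (intro exI[of _ "insert v E"] conjI)
    show "finite (insert v E)" and "card (insert v E) = Suc k"
      using fin card \<open>v \<notin> E\<close> by simp_all
    show "pairwise orthogonal (insert v E)"
      using orth vE by (auto simp: pairwise_insert orthogonal_def inner_commute)
    show "\<forall>e\<in>insert v E. e \<bullet> e = 1 \<and> (\<exists>l. A *v e = l *\<^sub>R e)"
      using eig vv ev by auto
  qed
qed

lemma orthonormal_basis_of_bij:
  assumes bij: "bij_betw u UNIV E" and orth: "pairwise orthogonal E" and unit: "\<And>e. e \<in> E \<Longrightarrow> e \<bullet> e = 1"
  shows "orthonormal_basis u"
  unfolding orthonormal_basis_def
proof (intro allI)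
  fix i j
  have uE: "u i \<in> E" "u j \<in> E"
    using bij bij_betwE by blast+
  show "u i \<bullet> u j = (if i = j then 1 else 0)"
  proof (cases "i = j")
    case False
    then have "u i \<noteq> u j"
      using bij by (metis bij_betw_iff_bijections iso_tuple_UNIV_I)
    then show ?thesis
      using orth uE False unfolding pairwise_def orthogonal_def by auto
  qed (use unit uE in auto)
qed

lemma eigenbasis_spectral_mat:
  fixes A :: "real^'n^'n"
  assumes u: "orthonormal_basis u" and eig: "\<And>i. A *v u i = l i *\<^sub>R u i"
  shows "A = spectral_mat u l"
proof -
  have "A *v x = spectral_mat u l *v x" for x
  proof -
    have "A *v x = A *v (\<Sum>i\<in>UNIV. (u i \<bullet> x) *\<^sub>R u i)"
      using orthonormal_basis_expansion[OF u, of x] by simp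
    also have "\<dots> = spectral_mat u l *v x"
      by (simp add: linear_sum[OF matrix_vector_mul_linear] matrix_vector_mult_scaleR
          spectral_mat_mult_vec eig mult_ac)
    finally show ?thesis .
  qed
  then show ?thesis
    by (simp add: matrix_eq)
qed

theorem symmetric_matrix_spectral_decomposition:
  fixes A :: "real^'n^'n"
  assumes sym: "transpose A = A"
  obtains u l where "orthonormal_basis u" "A = spectral_mat u l"
proof -
  obtain E where fin: "finite E" and card: "card E = CARD('n)" and orth: "pairwise orthogonal E"
    and eig: "\<forall>e\<in>E. e \<bullet> e = 1 \<and> (\<exists>l. A *v e = l *\<^sub>R e)"
    using orthonormal_eigenvectors_exist[OF sym order_refl] by blast
  obtain u where bij: "bij_betw u (UNIV::'n set) E"
    using finite_same_card_bij[OF _ fin, of "UNIV::'n set"] card by auto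
  then have u: "orthonormal_basis u"
    using orth eig by (intro orthonormal_basis_of_bij) auto
  define l where "l i = (SOME l. A *v u i = l *\<^sub>R u i)" for i
  have "A *v u i = l i *\<^sub>R u i" for i
    unfolding l_def using eig bij_betwE[OF bij] by (metis (mono_tags, lifting) UNIV_I someI_ex)
  then have "A = spectral_mat u l"
    by (rule eigenbasis_spectral_mat[OF u])
  with u that show ?thesis
    by blast
qed

lemma spectral_mat_basis_quadratic_form:
  assumes "orthonormal_basis u"
  shows "u i \<bullet> (spectral_mat u l *v u i) = l i"
  using orthonormal_basis_unit[OF assms] by (simp add: spectral_mat_eigenvector[OF assms])

lemma spec_norm_symmetric_le:
  fixes M :: "real^'n^'n"
  assumes sym: "transpose M = M" and bound: "\<And>x. \<bar>x \<bullet> (M *v x)\<bar> \<le> c * (x \<bullet> x)"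
  shows "spec_norm M \<le> c"
proof -
  obtain u l where u: "orthonormal_basis u" and M: "M = spectral_mat u l"
    using symmetric_matrix_spectral_decomposition[OF sym] .
  have "\<bar>l i\<bar> \<le> c" for i
    using bound[of "u i"] orthonormal_basis_unit[OF u, of i]
    by (simp add: M spectral_mat_basis_quadratic_form[OF u])
  then show ?thesis
    unfolding M by (rule spec_norm_spectral_mat_le[OF u])
qed

section \<open>Square roots of positive definite matrices\<close>

definition psd_mat :: "real^'n^'n \<Rightarrow> bool" where
  "psd_mat M \<longleftrightarrow> transpose M = M \<and> (\<forall>x. 0 \<le> x \<bullet> (M *v x))"

lemma pos_def_imp_psd_mat: "pos_def_mat M \<Longrightarrow> psd_mat M"
  unfolding pos_def_mat_def psd_mat_def by (metis inner_zero_left order_less_imp_le order_refl)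

lemma psd_spectral_mat:
  assumes "orthonormal_basis u" and "\<And>i. 0 \<le> f i"
  shows "psd_mat (spectral_mat u f)"
  unfolding psd_mat_def spectral_mat_quadratic_form[OF assms(1)]
  using assms(2) by (simp add: transpose_spectral_mat sum_nonneg)

lemma pos_def_spectral_mat:
  fixes u :: "'n::finite \<Rightarrow> real^'n"
  assumes u: "orthonormal_basis u" and f: "\<And>i. 0 < f i"
  shows "pos_def_mat (spectral_mat u f)"
  unfolding pos_def_mat_def
proof (intro conjI allI impI transpose_spectral_mat)
  fix x :: "real^'n"
  assume "x \<noteq> 0"
  then obtain i where "u i \<bullet> x \<noteq> 0"
    using orthonormal_basis_expansion[OF u, of x] by (metis (no_types, lifting) scale_zero_left sum.neutral)
  then have "0 < f i * (u i \<bullet> x)\<^sup>2"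
    using f by simp
  also have "\<dots> \<le> (\<Sum>j\<in>UNIV. f j * (u j \<bullet> x)\<^sup>2)"
    using f by (intro member_le_sum) (auto simp: less_imp_le)
  finally show "0 < x \<bullet> (spectral_mat u f *v x)"
    unfolding spectral_mat_quadratic_form[OF u] .
qed

text \<open>If \<open>v\<close> is a unit eigenvector of \<open>A - B\<close> with eigenvalue \<open>l\<close>, then
  \<open>v (A\<^sup>2 - B\<^sup>2) v = l (v A v + v B v)\<close>, and \<open>\<bar>l\<bar> = \<bar>v A v - v B v\<bar> \<le> v A v + v B v\<close>.\<close>

lemma psd_diff_eigenvalue_sq_le:
  assumes A: "psd_mat A" and B: "psd_mat B" and vv: "v \<bullet> v = 1" and ev: "(A - B) *v v = l *\<^sub>R v"
  shows "l\<^sup>2 \<le> \<bar>v \<bullet> ((A ** A - B ** B) *v v)\<bar>"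
proof -
  define a where "a = v \<bullet> (A *v v)"
  define b where "b = v \<bullet> (B *v v)"
  have "0 \<le> a" "0 \<le> b"
    using A B unfolding psd_mat_def a_def b_def by auto
  have diff: "A *v v - B *v v = l *\<^sub>R v"
    using ev by (simp add: matrix_vector_mult_diff_rdistrib)
  have "l = v \<bullet> (l *\<^sub>R v)"
    using vv by simp
  also have "\<dots> = a - b"
    unfolding a_def b_def diff[symmetric] by (simp add: inner_diff_right)
  finally have l: "l = a - b" .
  have "v \<bullet> ((A ** A - B ** B) *v v) = (A *v v) \<bullet> (A *v v) - (B *v v) \<bullet> (B *v v)"
    using A B unfolding psd_mat_def
    by (simp add: matrix_vector_mult_diff_rdistrib matrix_vector_mul_assoc[symmetric] inner_diff_right
        symmetric_matrix_inner)
  also have "\<dots> = (A *v v - B *v v) \<bullet> (A *v v + B *v v)"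
    by (simp add: inner_diff_left inner_add_right inner_commute[of "B *v v" "A *v v"])
  also have "\<dots> = l * (a + b)"
    unfolding diff a_def b_def by (simp only: inner_scaleR_left inner_add_right distrib_left)
  finally have eq: "v \<bullet> ((A ** A - B ** B) *v v) = l * (a + b)" .
  have "l\<^sup>2 = \<bar>l\<bar> * \<bar>l\<bar>"
    by (simp add: power2_eq_square)
  also have "\<dots> \<le> \<bar>l\<bar> * (a + b)"
    using l \<open>0 \<le> a\<close> \<open>0 \<le> b\<close> by (intro mult_left_mono) auto
  also have "\<dots> = \<bar>v \<bullet> ((A ** A - B ** B) *v v)\<bar>"
    using \<open>0 \<le> a\<close> \<open>0 \<le> b\<close> by (simp add: eq abs_mult)
  finally show ?thesis .
qed

lemma spec_norm_psd_diff_le_sqrt: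
  assumes A: "psd_mat A" and B: "psd_mat B"
  shows "spec_norm (A - B) \<le> sqrt (spec_norm (A ** A - B ** B))"
proof -
  have "transpose (A - B) = A - B"
    using A B unfolding psd_mat_def by (simp add: transpose_diff)
  then obtain u l where u: "orthonormal_basis u" and AB: "A - B = spectral_mat u l"
    by (rule symmetric_matrix_spectral_decomposition)
  have "\<bar>l i\<bar> \<le> sqrt (spec_norm (A ** A - B ** B))" for i
  proof -
    have unit: "u i \<bullet> u i = 1" and "norm (u i) = 1"
      using orthonormal_basis_unit[OF u] by (auto simp: norm_eq_1)
    have "(l i)\<^sup>2 \<le> \<bar>u i \<bullet> ((A ** A - B ** B) *v u i)\<bar>"
      by (rule psd_diff_eigenvalue_sq_le[OF A B unit]) (simp add: AB spectral_mat_eigenvector[OF u])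
    also have "\<dots> \<le> norm (u i) * norm ((A ** A - B ** B) *v u i)"
      by (rule Cauchy_Schwarz_ineq2)
    also have "\<dots> \<le> spec_norm (A ** A - B ** B)"
      using spec_norm_bound[of _ "u i"] \<open>norm (u i) = 1\<close> by simp
    finally show ?thesis
      using real_sqrt_le_mono by fastforce
  qed
  then show ?thesis
    unfolding AB by (rule spec_norm_spectral_mat_le[OF u])
qed

lemma psd_mat_square_unique:
  assumes "psd_mat A" "psd_mat B" and "A ** A = B ** B"
  shows "A = B"
proof -
  have "spec_norm (A ** A - B ** B) = 0"
    using assms(3) by (simp add: spec_norm_eq_0_iff)
  then have "spec_norm (A - B) \<le> 0"
    using spec_norm_psd_diff_le_sqrt[OF assms(1,2)] by simp
  then have "spec_norm (A - B) = 0"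
    using spec_norm_nonneg antisym by blast
  then show ?thesis
    by (simp add: spec_norm_eq_0_iff)
qed

lemma mat_inv_sqrt_spectral_mat:
  assumes u: "orthonormal_basis u" and l: "\<And>i. 0 < l i"
  shows "mat_inv_sqrt (spectral_mat u l) = spectral_mat u (\<lambda>i. 1 / sqrt (l i))"
  unfolding mat_inv_sqrt_def
proof (rule the_equality)
  let ?S = "spectral_mat u (\<lambda>i. 1 / sqrt (l i))"
  have l0: "l i \<noteq> 0" for i
    using l[of i] by simp
  have "?S ** ?S ** spectral_mat u l = spectral_mat u (\<lambda>i. 1)"
    using l by (simp add: spectral_mat_mult[OF u] field_simps abs_of_pos l0)
  then show SS: "pos_def_mat ?S \<and> ?S ** ?S ** spectral_mat u l = mat 1"
    using l by (simp add: pos_def_spectral_mat[OF u] spectral_mat_one[OF u])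
  fix S
  assume S: "pos_def_mat S \<and> S ** S ** spectral_mat u l = mat 1"
  have "spectral_mat u l ** (?S ** ?S) = mat 1"
    using l by (simp add: spectral_mat_mult[OF u] field_simps abs_of_pos l0 spectral_mat_one[OF u])
  then have "S ** S = (S ** S) ** (spectral_mat u l ** (?S ** ?S))"
    by simp
  also have "\<dots> = (S ** S ** spectral_mat u l) ** (?S ** ?S)"
    by (simp only: matrix_mul_assoc)
  also have "\<dots> = ?S ** ?S"
    using S by simp
  finally show "S = ?S"
    using S SS pos_def_imp_psd_mat psd_mat_square_unique by blast
qed

lemma lower_bounded_spectral_decomposition:
  fixes P :: "real^'n^'n"
  assumes sym: "transpose P = P" and lower: "\<And>x. \<tau> * (x \<bullet> x) \<le> x \<bullet> (P *v x)" and "0 < \<tau>"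
  obtains u l where "orthonormal_basis u" "P = spectral_mat u l" "\<And>i. \<tau> \<le> l i"
    "mat_inv_sqrt P = spectral_mat u (\<lambda>i. 1 / sqrt (l i))"
proof -
  obtain u l where u: "orthonormal_basis u" and P: "P = spectral_mat u l"
    using symmetric_matrix_spectral_decomposition[OF sym] .
  have l\<tau>: "\<tau> \<le> l i" for i
    using lower[of "u i"] orthonormal_basis_unit[OF u, of i]
    by (simp add: P spectral_mat_basis_quadratic_form[OF u])
  then have "0 < l i" for i
    using \<open>0 < \<tau>\<close> order_less_le_trans by blast
  with u P l\<tau> that show ?thesis
    using mat_inv_sqrt_spectral_mat by blast
qed

lemma spec_norm_mat_inv_sqrt_le:
  fixes P :: "real^'n^'n"
  assumes "transpose P = P" "\<And>x. \<tau> * (x \<bullet> x) \<le> x \<bullet> (P *v x)" and \<tau>: "0 < \<tau>"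
  shows "spec_norm (mat_inv_sqrt P) \<le> 1 / sqrt \<tau>"
proof -
  obtain u l where u: "orthonormal_basis u" and l: "\<And>i. \<tau> \<le> l i"
    and inv_sqrt: "mat_inv_sqrt P = spectral_mat u (\<lambda>i. 1 / sqrt (l i))"
    using lower_bounded_spectral_decomposition[OF assms] by metis
  show ?thesis
    unfolding inv_sqrt
  proof (rule spec_norm_spectral_mat_le[OF u])
    fix i
    have "sqrt \<tau> \<le> sqrt (l i)"
      using l[of i] by simp
    then show "\<bar>1 / sqrt (l i)\<bar> \<le> 1 / sqrt \<tau>"
      using l[of i] \<tau> by (simp add: frac_le)
  qed
qed

lemma mat_inv_sqrt_square_root:
  fixes P :: "real^'n^'n"
  assumes "transpose P = P" "\<And>x. \<tau> * (x \<bullet> x) \<le> x \<bullet> (P *v x)" and \<tau>: "0 < \<tau>"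
  obtains R where "psd_mat R" "R ** R = P" "mat_inv_sqrt P ** R = mat 1" "R ** mat_inv_sqrt P = mat 1"
proof -
  obtain u l where u: "orthonormal_basis u" and P: "P = spectral_mat u l" and l: "\<And>i. \<tau> \<le> l i"
    and inv_sqrt: "mat_inv_sqrt P = spectral_mat u (\<lambda>i. 1 / sqrt (l i))"
    using lower_bounded_spectral_decomposition[OF assms] by metis
  have l0: "0 < l i" for i
    using l[of i] \<tau> by linarith
  define R where "R = spectral_mat u (\<lambda>i. sqrt (l i))"
  show ?thesis
  proof
    show "psd_mat R"
      unfolding R_def using l0 by (intro psd_spectral_mat[OF u]) (simp add: less_imp_le)
    show "R ** R = P"
      unfolding R_def P using l0 by (simp add: spectral_mat_mult[OF u] abs_of_pos)
    have "l i \<noteq> 0" for i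
      using l0[of i] by simp
    then show "mat_inv_sqrt P ** R = mat 1" "R ** mat_inv_sqrt P = mat 1"
      unfolding R_def inv_sqrt by (simp_all add: spectral_mat_mult[OF u] spectral_mat_one[OF u])
  qed
qed

section \<open>Perturbation of inverse square root congruences\<close>

lemma sandwich_diff_expansion:
  fixes S Sb Q Qb :: "real^'n^'n"
  shows "S ** Q ** S - Sb ** Qb ** Sb
    = Sb ** (Q - Qb) ** Sb + (S - Sb) ** Q ** Sb + Sb ** Q ** (S - Sb) + (S - Sb) ** Q ** (S - Sb)"
  by (simp add: matrix_eq matrix_vector_mul_assoc[symmetric] matrix_vector_mult_add_rdistrib
      matrix_vector_mult_diff_rdistrib matrix_vector_right_distrib matrix_vector_mult_diff_distrib
      algebra_simps)

lemma spec_norm_sandwich_diff_le: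
  fixes S Sb Q Qb :: "real^'n^'n"
  assumes "spec_norm S \<le> a" "spec_norm Sb \<le> a" "spec_norm (S - Sb) \<le> e"
    and "spec_norm Q \<le> b" "spec_norm (Q - Qb) \<le> \<delta>"
  shows "spec_norm (S ** Q ** S - Sb ** Qb ** Sb) \<le> a * \<delta> * a + e * b * a + a * b * e + e * b * e"
proof -
  let ?E = "S - Sb"
  have "spec_norm (S ** Q ** S - Sb ** Qb ** Sb)
      \<le> spec_norm (Sb ** (Q - Qb) ** Sb) + spec_norm (?E ** Q ** Sb) + spec_norm (Sb ** Q ** ?E)
        + spec_norm (?E ** Q ** ?E)"
    unfolding sandwich_diff_expansion by (meson add_mono order_trans order_refl spec_norm_add)
  also have "\<dots> \<le> a * \<delta> * a + e * b * a + a * b * e + e * b * e"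
    using assms by (intro add_mono spec_norm_mult3)
  finally show ?thesis .
qed

lemma spec_norm_mat_inv_sqrt_diff_le:
  fixes P Pb :: "real^'n^'n"
  assumes "transpose P = P" "\<And>x. \<tau> * (x \<bullet> x) \<le> x \<bullet> (P *v x)"
    and "transpose Pb = Pb" "\<And>x. \<tau> * (x \<bullet> x) \<le> x \<bullet> (Pb *v x)" and \<tau>: "0 < \<tau>"
  shows "spec_norm (mat_inv_sqrt P - mat_inv_sqrt Pb) \<le> sqrt (spec_norm (P - Pb)) / \<tau>"
proof -
  obtain R where R: "psd_mat R" "R ** R = P" "mat_inv_sqrt P ** R = mat 1"
    using mat_inv_sqrt_square_root[OF assms(1,2) \<tau>] by metis
  obtain Rb where Rb: "psd_mat Rb" "Rb ** Rb = Pb" "Rb ** mat_inv_sqrt Pb = mat 1"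
    using mat_inv_sqrt_square_root[OF assms(3,4) \<tau>] by metis
  note S = spec_norm_mat_inv_sqrt_le[OF assms(1,2) \<tau>]
  note Sb = spec_norm_mat_inv_sqrt_le[OF assms(3,4) \<tau>]
  have RR: "spec_norm (Rb - R) \<le> sqrt (spec_norm (P - Pb))"
    using spec_norm_psd_diff_le_sqrt[OF R(1) Rb(1)] R(2) Rb(2) by (simp add: spec_norm_minus_commute)
  have eq: "mat_inv_sqrt P - mat_inv_sqrt Pb = mat_inv_sqrt P ** (Rb - R) ** mat_inv_sqrt Pb"
    using R(3) Rb(3)
    by (simp add: matrix_eq matrix_vector_mul_assoc[symmetric] matrix_vector_mult_diff_rdistrib
        matrix_vector_mult_diff_distrib)
  have "spec_norm (mat_inv_sqrt P - mat_inv_sqrt Pb)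
      \<le> 1 / sqrt \<tau> * sqrt (spec_norm (P - Pb)) * (1 / sqrt \<tau>)"
    unfolding eq by (rule spec_norm_mult3[OF S RR Sb])
  also have "\<dots> = sqrt (spec_norm (P - Pb)) / \<tau>"
    using \<tau> by (simp add: field_simps)
  finally show ?thesis .
qed

lemma inv_sqrt_sandwich_bound_eq:
  fixes \<tau> \<delta>P \<delta>Q \<beta> :: real
  assumes "0 < \<tau>" "0 \<le> \<delta>P"
  shows "1 / sqrt \<tau> * \<delta>Q * (1 / sqrt \<tau>) + sqrt \<delta>P / \<tau> * \<beta> * (1 / sqrt \<tau>)
      + 1 / sqrt \<tau> * \<beta> * (sqrt \<delta>P / \<tau>) + sqrt \<delta>P / \<tau> * \<beta> * (sqrt \<delta>P / \<tau>)
    = \<beta> / \<tau> * (\<delta>P / \<tau> + 2 * sqrt (\<delta>P / \<tau>)) + \<delta>Q / \<tau>"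
proof -
  define r q where "r = sqrt \<tau>" and "q = sqrt \<delta>P"
  have sqrt_quotient: "sqrt (\<delta>P / \<tau>) = q / r"
    by (simp add: r_def q_def real_sqrt_divide)
  have "0 < r" and \<tau>_sq: "\<tau> = r\<^sup>2" and \<delta>P_sq: "\<delta>P = q\<^sup>2"
    using assms by (simp_all add: r_def q_def)
  then show ?thesis
    unfolding sqrt_quotient r_def[symmetric] q_def[symmetric] unfolding \<tau>_sq \<delta>P_sq
    by (simp add: field_simps power2_eq_square)
qed

lemma spec_norm_inv_sqrt_congruence_diff_le:
  fixes P Pb Q Qb :: "real^'n^'n"
  assumes P: "transpose P = P" "\<And>x. \<tau> * (x \<bullet> x) \<le> x \<bullet> (P *v x)"
    and Pb: "transpose Pb = Pb" "\<And>x. \<tau> * (x \<bullet> x) \<le> x \<bullet> (Pb *v x)" and \<tau>: "0 < \<tau>"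
    and \<delta>P: "spec_norm (P - Pb) \<le> \<delta>P" and \<delta>Q: "spec_norm (Q - Qb) \<le> \<delta>Q"
    and Qb: "spec_norm Qb \<le> \<alpha>"
  shows "spec_norm (mat_inv_sqrt P ** Q ** mat_inv_sqrt P - mat_inv_sqrt Pb ** Qb ** mat_inv_sqrt Pb)
    \<le> (\<alpha> + \<delta>Q) / \<tau> * (\<delta>P / \<tau> + 2 * sqrt (\<delta>P / \<tau>)) + \<delta>Q / \<tau>"
proof -
  have "0 \<le> \<delta>P"
    using \<delta>P spec_norm_nonneg order_trans by blast
  have "spec_norm (mat_inv_sqrt P - mat_inv_sqrt Pb) \<le> sqrt (spec_norm (P - Pb)) / \<tau>"
    by (rule spec_norm_mat_inv_sqrt_diff_le[OF P Pb \<tau>])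
  also have "\<dots> \<le> sqrt \<delta>P / \<tau>"
    using \<delta>P \<tau> by (simp add: divide_right_mono)
  finally have E: "spec_norm (mat_inv_sqrt P - mat_inv_sqrt Pb) \<le> sqrt \<delta>P / \<tau>" .
  have "spec_norm Q \<le> spec_norm Qb + spec_norm (Q - Qb)"
    using spec_norm_add[of Qb "Q - Qb"] by simp
  then have Q: "spec_norm Q \<le> \<alpha> + \<delta>Q"
    using Qb \<delta>Q by linarith
  have "spec_norm (mat_inv_sqrt P ** Q ** mat_inv_sqrt P - mat_inv_sqrt Pb ** Qb ** mat_inv_sqrt Pb)
    \<le> 1 / sqrt \<tau> * \<delta>Q * (1 / sqrt \<tau>) + sqrt \<delta>P / \<tau> * (\<alpha> + \<delta>Q) * (1 / sqrt \<tau>)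
      + 1 / sqrt \<tau> * (\<alpha> + \<delta>Q) * (sqrt \<delta>P / \<tau>) + sqrt \<delta>P / \<tau> * (\<alpha> + \<delta>Q) * (sqrt \<delta>P / \<tau>)"
    by (rule spec_norm_sandwich_diff_le[OF spec_norm_mat_inv_sqrt_le[OF P \<tau>]
          spec_norm_mat_inv_sqrt_le[OF Pb \<tau>] E Q \<delta>Q])
  also have "\<dots> = (\<alpha> + \<delta>Q) / \<tau> * (\<delta>P / \<tau> + 2 * sqrt (\<delta>P / \<tau>)) + \<delta>Q / \<tau>"
    using \<tau> \<open>0 \<le> \<delta>P\<close> by (rule inv_sqrt_sandwich_bound_eq)
  finally show ?thesis .
qed

section \<open>Normalized Laplacians\<close>

lemma diag_mat_vec_nth: "(diag_mat d *v x) $ i = d i * x $ i"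
proof -
  have "(diag_mat d *v x) $ i = (\<Sum>j\<in>UNIV. (if i = j then d i else 0) * x $ j)"
    unfolding diag_mat_def matrix_vector_mult_def by simp
  also have "\<dots> = (\<Sum>j\<in>UNIV. if j = i then d i * x $ i else 0)"
    by (rule sum.cong) auto
  finally show ?thesis
    by simp
qed

lemma transpose_diag_mat: "transpose (diag_mat d) = diag_mat d"
  unfolding diag_mat_def transpose_def by (simp add: vec_eq_iff)

lemma quadratic_form_shift:
  fixes A :: "real^'n^'n"
  shows "x \<bullet> ((A + t *\<^sub>R mat 1) *v x) = x \<bullet> (A *v x) + t * (x \<bullet> x)"
  by (simp add: matrix_vector_mult_add_rdistrib inner_add_right scaleR_matrix_vector_assoc[symmetric])

definition deg_inv_sqrt_mat :: "real^'n^'n \<Rightarrow> real^'n^'n" where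
  "deg_inv_sqrt_mat A = diag_mat (\<lambda>i. 1 / sqrt (deg A i))"

lemma symmetric_sym_lap:
  assumes "transpose A = A"
  shows "transpose (sym_lap A) = sym_lap A"
  unfolding sym_lap_def
  by (simp add: transpose_diff matrix_transpose_mul transpose_diag_mat matrix_mul_assoc assms)

lemma sym_lap_quadratic_form:
  "x \<bullet> (sym_lap A *v x) = x \<bullet> x - (deg_inv_sqrt_mat A *v x) \<bullet> (A *v (deg_inv_sqrt_mat A *v x))"
proof -
  let ?D = "deg_inv_sqrt_mat A"
  have "x \<bullet> (sym_lap A *v x) = x \<bullet> x - x \<bullet> (?D *v (A *v (?D *v x)))"
    unfolding sym_lap_def deg_inv_sqrt_mat_def[symmetric]
    by (simp add: matrix_vector_mult_diff_rdistrib inner_diff_right matrix_vector_mul_assoc[symmetric])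
  also have "x \<bullet> (?D *v (A *v (?D *v x))) = (?D *v x) \<bullet> (A *v (?D *v x))"
    using symmetric_matrix_inner[of ?D x] by (simp add: deg_inv_sqrt_mat_def transpose_diag_mat)
  finally show ?thesis .
qed

lemma deg_weighted_sum_sq:
  assumes "\<And>i. 0 < deg A i"
  shows "(\<Sum>i\<in>UNIV. deg A i * ((deg_inv_sqrt_mat A *v x) $ i)\<^sup>2) = x \<bullet> x"
proof -
  have "deg A i * ((deg_inv_sqrt_mat A *v x) $ i)\<^sup>2 = (x $ i)\<^sup>2" for i
    using assms[of i] unfolding deg_inv_sqrt_mat_def diag_mat_vec_nth
    by (simp add: power_mult_distrib power_divide less_imp_le)
  then show ?thesis
    by (simp add: inner_vec_def power2_eq_square)
qed

lemma quadratic_form_le_deg: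
  fixes A :: "real^'n^'n"
  assumes sym: "transpose A = A" and nonneg: "\<And>i j. 0 \<le> A $ i $ j"
  shows "y \<bullet> (A *v y) \<le> (\<Sum>i\<in>UNIV. deg A i * (y $ i)\<^sup>2)"
proof -
  have entry: "A $ i $ j = A $ j $ i" for i j
    by (metis sym transpose_def vec_lambda_beta)
  have deg_sum: "(\<Sum>i\<in>UNIV. \<Sum>j\<in>UNIV. A $ i $ j * (y $ i)\<^sup>2) = (\<Sum>i\<in>UNIV. deg A i * (y $ i)\<^sup>2)"
    unfolding deg_def by (simp add: sum_distrib_right)
  have "y \<bullet> (A *v y) = (\<Sum>i\<in>UNIV. \<Sum>j\<in>UNIV. A $ i $ j * (y $ i * y $ j))"
    unfolding inner_vec_def matrix_vector_mult_def by (simp add: sum_distrib_left mult_ac)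
  also have "\<dots> \<le> (\<Sum>i\<in>UNIV. \<Sum>j\<in>UNIV. A $ i $ j * (((y $ i)\<^sup>2 + (y $ j)\<^sup>2) / 2))"
  proof (intro sum_mono mult_left_mono[OF _ nonneg])
    fix i j
    show "y $ i * y $ j \<le> ((y $ i)\<^sup>2 + (y $ j)\<^sup>2) / 2"
      using sum_squares_bound[of "y $ i" "y $ j"] by (simp add: power2_eq_square)
  qed
  also have "\<dots> = ((\<Sum>i\<in>UNIV. \<Sum>j\<in>UNIV. A $ i $ j * (y $ i)\<^sup>2)
      + (\<Sum>i\<in>UNIV. \<Sum>j\<in>UNIV. A $ j $ i * (y $ j)\<^sup>2)) / 2"
    by (simp add: entry sum.distrib sum_divide_distrib distrib_left add_divide_distrib)
  also have "(\<Sum>i\<in>UNIV. \<Sum>j\<in>UNIV. A $ j $ i * (y $ j)\<^sup>2) = (\<Sum>i\<in>UNIV. \<Sum>j\<in>UNIV. A $ i $ j * (y $ i)\<^sup>2)"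
    by (rule sum.swap)
  finally show ?thesis
    unfolding deg_sum by simp
qed

lemma sym_lap_psd:
  fixes A :: "real^'n^'n"
  assumes "transpose A = A" "\<And>i j. 0 \<le> A $ i $ j" "\<And>i. 0 < deg A i"
  shows "0 \<le> x \<bullet> (sym_lap A *v x)"
  using quadratic_form_le_deg[OF assms(1,2), of "deg_inv_sqrt_mat A *v x"]
  unfolding sym_lap_quadratic_form deg_weighted_sum_sq[OF assms(3)] by simp

lemma sym_lap_quadratic_form_le:
  fixes A :: "real^'n^'n"
  assumes lower: "\<And>y. - c * (y \<bullet> y) \<le> y \<bullet> (A *v y)" and "0 \<le> c"
    and d: "0 < d" "\<And>i. d \<le> deg A i"
  shows "x \<bullet> (sym_lap A *v x) \<le> (1 + c / d) * (x \<bullet> x)"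
proof -
  define y where "y = deg_inv_sqrt_mat A *v x"
  have "0 < deg A i" for i
    using d order_less_le_trans by blast
  have "d * (y \<bullet> y) = (\<Sum>i\<in>UNIV. d * (y $ i)\<^sup>2)"
    by (simp add: inner_vec_def sum_distrib_left power2_eq_square)
  also have "\<dots> \<le> (\<Sum>i\<in>UNIV. deg A i * (y $ i)\<^sup>2)"
    using d by (intro sum_mono mult_right_mono) auto
  also have "\<dots> = x \<bullet> x"
    unfolding y_def by (rule deg_weighted_sum_sq) fact
  finally have "d * (y \<bullet> y) \<le> x \<bullet> x" .
  then have "c * (y \<bullet> y) \<le> c / d * (x \<bullet> x)"
    using d \<open>0 \<le> c\<close> by (simp add: field_simps mult_left_mono)
  then show ?thesis
    using lower[of y] unfolding sym_lap_quadratic_form y_def[symmetric] by (simp add: algebra_simps)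
qed

lemma symmetric_shifted_sym_lap:
  fixes A :: "real^'n^'n"
  assumes "transpose A = A"
  shows "transpose (sym_lap A + \<tau> *\<^sub>R mat 1) = sym_lap A + \<tau> *\<^sub>R mat 1"
  by (simp add: transpose_add transpose_scalar symmetric_sym_lap[OF assms])

lemma shifted_sym_lap_lower_bound:
  fixes A :: "real^'n^'n"
  assumes "transpose A = A" "\<And>i j. 0 \<le> A $ i $ j" "\<And>i. 0 < deg A i"
  shows "\<tau> * (x \<bullet> x) \<le> x \<bullet> ((sym_lap A + \<tau> *\<^sub>R mat 1) *v x)"
  using sym_lap_psd[OF assms, of x] by (simp add: quadratic_form_shift)

section \<open>Expected adjacency matrices of the SSBM\<close>

definition cluster_indicator :: "('n::finite \<Rightarrow> 'a) \<Rightarrow> real^'n^'n" where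
  "cluster_indicator cl = (\<chi> i j. if cl i = cl j then 1 else 0)"

lemma cluster_indicator_quadratic_form:
  "y \<bullet> (cluster_indicator cl *v y) = (\<Sum>c\<in>range cl. (\<Sum>j | cl j = c. y $ j)\<^sup>2)"
proof -
  define s where "s c = (\<Sum>j | cl j = c. y $ j)" for c
  have "(cluster_indicator cl *v y) $ i = s (cl i)" for i
  proof -
    have "(cluster_indicator cl *v y) $ i = (\<Sum>j\<in>UNIV. if cl j = cl i then y $ j else 0)"
      unfolding cluster_indicator_def matrix_vector_mult_def by (auto intro: sum.cong)
    also have "\<dots> = s (cl i)"
      unfolding s_def by (simp add: sum.If_cases)
    finally show ?thesis .
  qed
  then have "y \<bullet> (cluster_indicator cl *v y) = (\<Sum>i\<in>UNIV. y $ i * s (cl i))"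
    by (simp add: inner_vec_def)
  also have "\<dots> = (\<Sum>c\<in>range cl. \<Sum>i | cl i = c. y $ i * s c)"
    by (subst sum.group[symmetric, of UNIV "range cl" cl]) (auto intro!: sum.cong)
  also have "\<dots> = (\<Sum>c\<in>range cl. (s c)\<^sup>2)"
    by (simp add: s_def sum_distrib_right power2_eq_square)
  finally show ?thesis
    unfolding s_def .
qed

text \<open>\<open>cluster_indicator (\<lambda>_. ())\<close> is the all-ones matrix.\<close>

lemma exp_adj_pos_cluster_decomposition:
  "exp_adj_pos p \<eta> cl = (p * \<eta>) *\<^sub>R cluster_indicator (\<lambda>_. ())
     + (p * (1 - 2 * \<eta>)) *\<^sub>R cluster_indicator cl - (p * (1 - \<eta>)) *\<^sub>R mat 1"
  unfolding exp_adj_pos_def cluster_indicator_def by (auto simp: vec_eq_iff mat_def algebra_simps)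

lemma exp_adj_pos_quadratic_form_ge:
  assumes "0 \<le> p" "0 \<le> \<eta>" "\<eta> \<le> 1/2"
  shows "- (p * (1 - \<eta>)) * (y \<bullet> y) \<le> y \<bullet> (exp_adj_pos p \<eta> cl *v y)"
proof -
  have "0 \<le> y \<bullet> (((p * \<eta>) *\<^sub>R cluster_indicator (\<lambda>_. ()) + (p * (1 - 2 * \<eta>)) *\<^sub>R cluster_indicator cl) *v y)"
    using assms
    by (simp add: matrix_vector_mult_add_rdistrib inner_add_right scaleR_matrix_vector_assoc[symmetric]
        cluster_indicator_quadratic_form sum_nonneg)
  then show ?thesis
    unfolding exp_adj_pos_cluster_decomposition
    by (simp add: matrix_vector_mult_diff_rdistrib inner_diff_right scaleR_matrix_vector_assoc[symmetric])
qed

lemma symmetric_exp_adj_pos: "transpose (exp_adj_pos p \<eta> cl) = exp_adj_pos p \<eta> cl"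
  unfolding exp_adj_pos_def transpose_def by (auto simp: vec_eq_iff)

lemma symmetric_exp_adj_neg: "transpose (exp_adj_neg p \<eta> cl) = exp_adj_neg p \<eta> cl"
  unfolding exp_adj_neg_def transpose_def by (auto simp: vec_eq_iff)

lemma exp_adj_pos_nonneg: "0 \<le> p \<Longrightarrow> 0 \<le> \<eta> \<Longrightarrow> \<eta> \<le> 1 \<Longrightarrow> 0 \<le> exp_adj_pos p \<eta> cl $ i $ j"
  unfolding exp_adj_pos_def by auto

lemma exp_adj_neg_nonneg: "0 \<le> p \<Longrightarrow> 0 \<le> \<eta> \<Longrightarrow> \<eta> \<le> 1 \<Longrightarrow> 0 \<le> exp_adj_neg p \<eta> cl $ i $ j"
  unfolding exp_adj_neg_def by auto

lemma deg_pos_of_entry: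
  fixes A :: "real^'n^'n"
  assumes "\<And>j. 0 \<le> A $ i $ j" and "0 < A $ i $ j"
  shows "0 < deg A i"
proof -
  have "A $ i $ j \<le> deg A i"
    unfolding deg_def by (rule member_le_sum) (use assms in auto)
  then show ?thesis
    using assms(2) by simp
qed

lemma deg_exp_adj_pos:
  fixes cl :: "'n::finite \<Rightarrow> 'k"
  shows "deg (exp_adj_pos p \<eta> cl) i
    = p * (real CARD('n) * \<eta> + real (card {j. cl j = cl i}) * (1 - 2 * \<eta>) - (1 - \<eta>))"
proof -
  have "exp_adj_pos p \<eta> cl $ i $ j
      = p * \<eta> + (if cl j = cl i then p * (1 - 2 * \<eta>) else 0) - (if j = i then p * (1 - \<eta>) else 0)" for j
    unfolding exp_adj_pos_def by (auto simp: algebra_simps)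
  then have "deg (exp_adj_pos p \<eta> cl) i = real CARD('n) * (p * \<eta>)
      + real (card {j. cl j = cl i}) * (p * (1 - 2 * \<eta>)) - p * (1 - \<eta>)"
    unfolding deg_def by (simp add: sum.distrib sum_subtractf sum.If_cases)
  then show ?thesis
    by (simp add: algebra_simps)
qed

lemma ds_plus_eq:
  fixes cl :: "'n::finite \<Rightarrow> 'k::finite"
  shows "ds_plus p \<eta> cl
    = p * (real CARD('n) * \<eta> + real (Min (range (\<lambda>c. card {i. cl i = c}))) * (1 - 2 * \<eta>) - (1 - \<eta>))"
  unfolding ds_plus_def smin_def by (simp add: algebra_simps)

lemma ds_plus_le_deg_exp_adj_pos:
  fixes cl :: "'n::finite \<Rightarrow> 'k::finite"
  assumes "0 \<le> p" "\<eta> \<le> 1/2"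
  shows "ds_plus p \<eta> cl \<le> deg (exp_adj_pos p \<eta> cl) i"
proof -
  have "Min (range (\<lambda>c. card {i. cl i = c})) \<le> card {j. cl j = cl i}"
    by (rule Min_le) auto
  then have "real (Min (range (\<lambda>c. card {i. cl i = c}))) * (1 - 2 * \<eta>)
      \<le> real (card {j. cl j = cl i}) * (1 - 2 * \<eta>)"
    using assms by (intro mult_right_mono) auto
  then show ?thesis
    unfolding ds_plus_eq deg_exp_adj_pos using assms by (intro mult_left_mono) auto
qed

lemma ds_plus_eq_deg_exp_adj_pos:
  fixes cl :: "'n::finite \<Rightarrow> 'k::finite"
  assumes "surj cl"
  obtains i where "ds_plus p \<eta> cl = deg (exp_adj_pos p \<eta> cl) i"
proof -
  have "Min (range (\<lambda>c. card {i. cl i = c})) \<in> range (\<lambda>c. card {i. cl i = c})"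
    by (rule Min_in) auto
  then obtain c where c: "Min (range (\<lambda>c. card {i. cl i = c})) = card {i. cl i = c}"
    by blast
  obtain i where "cl i = c"
    using assms by (metis surjD)
  then have "ds_plus p \<eta> cl = deg (exp_adj_pos p \<eta> cl) i"
    unfolding ds_plus_eq deg_exp_adj_pos c by simp
  then show ?thesis
    by (rule that)
qed

text \<open>Positivity of \<open>d\<^sub>s\<^sup>+\<close> needs the realization: a node of a smallest cluster has an
  edge in \<open>Ap\<close>, and every edge of the realization has positive expected weight.\<close>

lemma ds_plus_pos:
  fixes cl :: "'n::finite \<Rightarrow> 'k::finite"
  assumes "surj cl" and p: "0 < p" and \<eta>: "0 \<le> \<eta>" "\<eta> < 1/2"
    and real: "ssbm_realization p \<eta> cl Ap Am" and deg: "\<And>i. 0 < deg Ap i"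
  shows "0 < ds_plus p \<eta> cl"
proof -
  obtain i where i: "ds_plus p \<eta> cl = deg (exp_adj_pos p \<eta> cl) i"
    using ds_plus_eq_deg_exp_adj_pos[OF \<open>surj cl\<close>] .
  have "\<exists>j. Ap $ i $ j \<noteq> 0"
  proof (rule ccontr)
    assume "\<not> (\<exists>j. Ap $ i $ j \<noteq> 0)"
    then have "deg Ap i = 0"
      unfolding deg_def by simp
    then show False
      using deg[of i] by simp
  qed
  then obtain j where edge: "Ap $ i $ j = 1" and "j \<noteq> i"
    using real unfolding ssbm_realization_def by (metis insert_iff singletonD)
  have "cl i \<noteq> cl j \<Longrightarrow> 0 < \<eta>"
    using real edge \<open>j \<noteq> i\<close> unfolding ssbm_realization_def by metis
  then have "0 < exp_adj_pos p \<eta> cl $ i $ j"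
    using p \<eta> \<open>j \<noteq> i\<close> unfolding exp_adj_pos_def by (cases "cl i = cl j") auto
  then have "0 < deg (exp_adj_pos p \<eta> cl) i"
    using p \<eta> by (intro deg_pos_of_entry exp_adj_pos_nonneg) auto
  then show ?thesis
    using i by simp
qed

lemma deg_exp_adj_neg_pos:
  fixes cl :: "'n::finite \<Rightarrow> 'k::finite"
  assumes "CARD('k) \<ge> 2" and "surj cl" and "0 < p" and "0 \<le> \<eta>" "\<eta> < 1/2"
  shows "0 < deg (exp_adj_neg p \<eta> cl) i"
proof -
  have "\<not> (\<forall>a\<in>(UNIV::'k set). \<forall>b\<in>UNIV. a = b)"
    using assms(1) card_le_Suc0_iff_eq[of "UNIV::'k set"] by auto
  then obtain c where "c \<noteq> cl i"
    by metis
  moreover obtain j where "cl j = c"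
    using \<open>surj cl\<close> by (metis surjD)
  ultimately have "0 < exp_adj_neg p \<eta> cl $ i $ j"
    using assms unfolding exp_adj_neg_def by auto
  then show ?thesis
    using assms by (intro deg_pos_of_entry exp_adj_neg_nonneg) auto
qed

lemma spec_norm_shifted_exp_sym_lap_le:
  fixes cl :: "'n::finite \<Rightarrow> 'k::finite"
  assumes p: "0 \<le> p" and \<eta>: "0 \<le> \<eta>" "\<eta> \<le> 1/2" and ds: "0 < ds_plus p \<eta> cl" and "0 \<le> \<tau>"
  shows "spec_norm (sym_lap (exp_adj_pos p \<eta> cl) + \<tau> *\<^sub>R mat 1)
    \<le> 1 + \<tau> + p * (1 - \<eta>) / ds_plus p \<eta> cl"
proof -
  let ?A = "exp_adj_pos p \<eta> cl"
  have sym: "transpose ?A = ?A"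
    by (rule symmetric_exp_adj_pos)
  have deg: "ds_plus p \<eta> cl \<le> deg ?A i" for i
    using ds_plus_le_deg_exp_adj_pos[OF p \<eta>(2)] .
  then have "0 < deg ?A i" for i
    using ds order_less_le_trans by blast
  then have lower: "0 \<le> x \<bullet> (sym_lap ?A *v x)" for x
    using p \<eta> by (intro sym_lap_psd[OF sym]) (auto intro: exp_adj_pos_nonneg)
  have upper: "x \<bullet> (sym_lap ?A *v x) \<le> (1 + p * (1 - \<eta>) / ds_plus p \<eta> cl) * (x \<bullet> x)" for x
    using p \<eta> ds deg by (intro sym_lap_quadratic_form_le exp_adj_pos_quadratic_form_ge) auto
  show ?thesis
  proof (rule spec_norm_symmetric_le[OF symmetric_shifted_sym_lap[OF sym]])
    fix x :: "real^'n"
    have "0 \<le> \<tau> * (x \<bullet> x)"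
      using \<open>0 \<le> \<tau>\<close> by simp
    then show "\<bar>x \<bullet> ((sym_lap ?A + \<tau> *\<^sub>R mat 1) *v x)\<bar> \<le> (1 + \<tau> + p * (1 - \<eta>) / ds_plus p \<eta> cl) * (x \<bullet> x)"
      unfolding quadratic_form_shift using lower[of x] upper[of x] by (simp add: distrib_right)
  qed
qed

lemma ssbm_realization_adj_neg:
  assumes "ssbm_realization p \<eta> cl Ap Am"
  shows "transpose Am = Am" and "0 \<le> Am $ i $ j"
proof -
  show "transpose Am = Am"
    using assms unfolding ssbm_realization_def by blast
  have "Am $ i $ j \<in> {0, 1}"
    using assms unfolding ssbm_realization_def by blast
  then show "0 \<le> Am $ i $ j"
    by auto
qed

theorem mainTheorem14:
  fixes cl :: "'n::finite \<Rightarrow> 'k::finite"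
    and p \<eta> tau_plus tau_minus \<Delta>P \<Delta>Q :: real
    and Ap Am :: "real^'n^'n"
  assumes "CARD('n) \<ge> 2" and "CARD('k) \<ge> 2" and "surj cl"
    and "0 < p" and "p \<le> 1" and "0 \<le> \<eta>" and "\<eta> < 1/2"
    and "ssbm_realization p \<eta> cl Ap Am"
    and "\<forall>i. deg Ap i > 0" and "\<forall>i. deg Am i > 0"
    and "tau_plus > 0" and "tau_minus \<ge> 0"
    and "spec_norm ((sym_lap Am + tau_plus *\<^sub>R mat 1)
           - (sym_lap (exp_adj_neg p \<eta> cl) + tau_plus *\<^sub>R mat 1)) \<le> \<Delta>P"
    and "spec_norm ((sym_lap Ap + tau_minus *\<^sub>R mat 1)
           - (sym_lap (exp_adj_pos p \<eta> cl) + tau_minus *\<^sub>R mat 1)) \<le> \<Delta>Q"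
  shows "spec_norm (T_mat (sym_lap Ap) (sym_lap Am) tau_plus tau_minus
           - T_mat (sym_lap (exp_adj_pos p \<eta> cl)) (sym_lap (exp_adj_neg p \<eta> cl)) tau_plus tau_minus)
         \<le> (1 + tau_minus + p * (1 - \<eta>) / ds_plus p \<eta> cl + \<Delta>Q) / tau_plus
              * (\<Delta>P / tau_plus + 2 * sqrt (\<Delta>P / tau_plus)) + \<Delta>Q / tau_plus"
proof -
  let ?Bb = "exp_adj_neg p \<eta> cl"
  have Am: "transpose Am = Am" "\<And>i j. 0 \<le> Am $ i $ j"
    using ssbm_realization_adj_neg[OF \<open>ssbm_realization p \<eta> cl Ap Am\<close>] by blast+
  have Bb: "transpose ?Bb = ?Bb" "\<And>i j. 0 \<le> ?Bb $ i $ j" "\<And>i. 0 < deg ?Bb i"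
    using assms(2-7) by (auto intro: symmetric_exp_adj_neg exp_adj_neg_nonneg deg_exp_adj_neg_pos)
  have "0 < ds_plus p \<eta> cl"
    using assms(3-9) by (intro ds_plus_pos) auto
  then have Qb: "spec_norm (sym_lap (exp_adj_pos p \<eta> cl) + tau_minus *\<^sub>R mat 1)
      \<le> 1 + tau_minus + p * (1 - \<eta>) / ds_plus p \<eta> cl"
    using assms(4,6,7,12) by (intro spec_norm_shifted_exp_sym_lap_le) auto
  show ?thesis
    unfolding T_mat_def
    by (rule spec_norm_inv_sqrt_congruence_diff_le[OF
          symmetric_shifted_sym_lap[OF Am(1)] shifted_sym_lap_lower_bound[OF Am assms(10)[rule_format]]
          symmetric_shifted_sym_lap[OF Bb(1)] shifted_sym_lap_lower_bound[OF Bb]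
          \<open>tau_plus > 0\<close> assms(13,14) Qb])
qed

end
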